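(* In the continuous Donation Game, assume additionally that $b$ is continuous and strictly increasing on $[0,K]$ (with inverse $b^{-1}:[0,b(K)]\to[0,K]$). Let $0\le\gamma\le b(K)-c(K)$, suppose $\lambda\ge c(K)/b(K)$, and let $x_0\in[0,K]$ satisfy $$\frac{\gamma-\lambda b(K)+c(K)}{1-\lambda}\le b(x_0)\le\frac{\gamma}{1-\lambda}.$$ Then $r^X(x,y):=b^{-1}\!\left(\frac{c(y)+\gamma-(1-\lambda)b(x_0)}{\lambda}\right)$ is well defined for all $x,y\in[0,K]$, and the deterministic memory-one strategy for $X$ with $\sigma_X^0=\delta_{x_0}$ and $\sigma_X[x,y]=\delta_{r^X(x,y)}$ enforces $\pi_Y=\gamma$ against every behavioral strategy of $Y$.
   Context: Continuous Donation Game: fix $K>0$ and measurable nondecreasing functions $b,c:[0,K]\to\mathbb{R}$ with $b(0)=c(0)=0$ and $b(s)>c(s)$ for $s>0$. Action spaces $S_X=S_Y=[0,K]$, payoffs $u_X(x,y)=b(y)-c(x)$, $u_Y(x,y)=b(x)-c(y)$, discount factor $\lambda\in(0,1)$. Repeated-game framework: histories $\mathcal{H}=\bigsqcup_T(S_X\times S_Y)^T$; a behavioral strategy is a Markov kernel from histories to the player's action space; a memory-one strategy for $X$ consists of an initial probability measure $\sigma_X^0$ and a Markov kernel $\sigma_X[x,y]$ applied to the previous action pair. The strategies generate, via $\mu_0=\sigma_X[\varnothing]\otimes\sigma_Y[\varnothing]$ and $\mu_t(E'\times E)=\int_{E'}(\sigma_X[h]\otimes\sigma_Y[h])(E)\,d\mu_{t-1}(h)$,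 the laws $\nu_t(E)=\mu_t(\mathcal{H}^t\times E)$ of the action pair at time $t$, and $\pi_X=(1-\lambda)\sum_t\lambda^t\int u_X\,d\nu_t$, $\pi_Y=(1-\lambda)\sum_t\lambda^t\int u_Y\,d\nu_t$. $\delta_s$ is the Dirac measure at $s$. *)

theory Defs
  imports "HOL-Probability.Probability"
begin

definition act_space :: "real \<Rightarrow> real measure" where
  "act_space K = restrict_space borel {0..K}"

definition pair_space :: "real \<Rightarrow> (real \<times> real) measure" where
  "pair_space K = act_space K \<Otimes>\<^sub>M act_space K"

definition hist_space :: "real \<Rightarrow> nat \<Rightarrow> (nat \<Rightarrow> real \<times> real) measure" where
  "hist_space K T = PiM {..<T} (\<lambda>_. pair_space K)"

text \<open>A behavioral strategy is a Markov kernel from histories to the action space.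
  Since the history space is a disjoint union, this is a family, indexed by the
  length T, of Markov kernels from histories of length T.\<close>
type_synonym strategy = "nat \<Rightarrow> (nat \<Rightarrow> real \<times> real) \<Rightarrow> real measure"

definition behavioral_strategy :: "real \<Rightarrow> strategy \<Rightarrow> bool" where
  "behavioral_strategy K \<sigma> \<longleftrightarrow>
     (\<forall>T. \<sigma> T \<in> measurable (hist_space K T) (prob_algebra (act_space K)))"

definition memory_one :: "real measure \<Rightarrow> (real \<Rightarrow> real \<Rightarrow> real measure) \<Rightarrow> strategy" where
  "memory_one s0 k T h = (case T of 0 \<Rightarrow> s0 | Suc n \<Rightarrow> k (fst (h n)) (snd (h n)))"

text \<open>mu K sX sY t: law of the history of length t+1.\<close>
primrec mu :: "real \<Rightarrow> strategy \<Rightarrow> strategy \<Rightarrow> nat \<Rightarrow> (nat \<Rightarrow> real \<times> real) measure" where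
  "mu K sX sY 0 =
     distr (sX 0 (\<lambda>_. undefined) \<Otimes>\<^sub>M sY 0 (\<lambda>_. undefined)) (hist_space K 1)
       (\<lambda>p. (\<lambda>i\<in>{..<1}. p))"
| "mu K sX sY (Suc t) =
     mu K sX sY t \<bind>
       (\<lambda>h. distr (sX (Suc t) h \<Otimes>\<^sub>M sY (Suc t) h) (hist_space K (Suc (Suc t)))
              (\<lambda>p. (\<lambda>i\<in>{..<Suc (Suc t)}. if i = Suc t then p else h i)))"

definition nu :: "real \<Rightarrow> strategy \<Rightarrow> strategy \<Rightarrow> nat \<Rightarrow> (real \<times> real) measure" where
  "nu K sX sY t = distr (mu K sX sY t) (pair_space K) (\<lambda>h. h t)"

definition payoff_X :: "(real \<Rightarrow> real) \<Rightarrow> (real \<Rightarrow> real) \<Rightarrow> real \<Rightarrow> real \<Rightarrow> strategy \<Rightarrow> strategy \<Rightarrow> real" where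
  "payoff_X b c lam K sX sY =
     (1 - lam) * (\<Sum>t. lam ^ t * (\<integral>p. b (snd p) - c (fst p) \<partial>nu K sX sY t))"

definition payoff_Y :: "(real \<Rightarrow> real) \<Rightarrow> (real \<Rightarrow> real) \<Rightarrow> real \<Rightarrow> real \<Rightarrow> strategy \<Rightarrow> strategy \<Rightarrow> real" where
  "payoff_Y b c lam K sX sY =
     (1 - lam) * (\<Sum>t. lam ^ t * (\<integral>p. b (fst p) - c (snd p) \<partial>nu K sX sY t))"

end

theory Submission
  imports Defs
begin

(* Put D = gamma - (1 - lam) b(x0). The response is chosen so that lam b(r(x, y)) = c(y) + D
   holds pointwise; hence, whatever Y plays, the expectations E t of b(x_t) and F t of c(y_t)
   satisfy E 0 = b(x0) and lam E (t + 1) = F t + D. The discounted sum of lam^t (E t - F t) then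
   telescopes to E 0 + D / (1 - lam), i.e. pi_Y = (1 - lam) b(x0) + D = gamma. The bounds on b(x0)
   are exactly what puts (c(y) + D) / lam into [0, b(K)], the range of b. *)

lemma space_act_space: "space (act_space K) = {0..K}"
  by (simp add: act_space_def space_restrict_space)

lemma space_pair_space: "space (pair_space K) = {0..K} \<times> {0..K}"
  by (simp add: pair_space_def space_pair_measure space_act_space)

lemma space_hist_space: "space (hist_space K T) = PiE {..<T} (\<lambda>_. {0..K} \<times> {0..K})"
  by (simp add: hist_space_def space_PiM space_pair_space)

lemma hist_space_component: "h \<in> space (hist_space K T) \<Longrightarrow> i < T \<Longrightarrow> h i \<in> space (pair_space K)"
  unfolding hist_space_def space_PiM by (erule PiE_mem) simp

lemma measurable_hist_component: "i < T \<Longrightarrow> (\<lambda>h. h i) \<in> hist_space K T \<rightarrow>\<^sub>M pair_space K"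
  unfolding hist_space_def by (rule measurable_component_singleton) simp

definition hist_snoc :: "nat \<Rightarrow> (nat \<Rightarrow> real \<times> real) \<Rightarrow> real \<times> real \<Rightarrow> nat \<Rightarrow> real \<times> real" where
  "hist_snoc n h p = (\<lambda>i\<in>{..<Suc n}. if i = n then p else h i)"

lemma measurable_hist_snoc:
  "(\<lambda>(h, p). hist_snoc n h p) \<in> hist_space K n \<Otimes>\<^sub>M pair_space K \<rightarrow>\<^sub>M hist_space K (Suc n)"
  unfolding hist_snoc_def case_prod_beta hist_space_def
proof (rule measurable_restrict)
  fix i assume "i \<in> {..<Suc n}"
  then show "(\<lambda>x. if i = n then snd x else fst x i)
      \<in> PiM {..<n} (\<lambda>_. pair_space K) \<Otimes>\<^sub>M pair_space K \<rightarrow>\<^sub>M pair_space K"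
    by (cases "i = n") auto
qed

definition play_step :: "real \<Rightarrow> strategy \<Rightarrow> strategy \<Rightarrow> nat \<Rightarrow> (nat \<Rightarrow> real \<times> real)
    \<Rightarrow> (nat \<Rightarrow> real \<times> real) measure" where
  "play_step K sX sY T h = distr (sX T h \<Otimes>\<^sub>M sY T h) (hist_space K (Suc T)) (hist_snoc T h)"

lemma mu_play_step:
  "mu K sX sY 0 = play_step K sX sY 0 (\<lambda>_. undefined)"
  "mu K sX sY (Suc t) = mu K sX sY t \<bind> play_step K sX sY (Suc t)"
proof -
  have "hist_snoc 0 h = (\<lambda>p. \<lambda>i\<in>{..<1}. p)" for h
    by (auto simp: hist_snoc_def fun_eq_iff)
  then show "mu K sX sY 0 = play_step K sX sY 0 (\<lambda>_. undefined)"
    by (simp add: play_step_def)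
  show "mu K sX sY (Suc t) = mu K sX sY t \<bind> play_step K sX sY (Suc t)"
    by (simp add: play_step_def[abs_def] hist_snoc_def[abs_def])
qed

lemma behavioral_strategyD:
  assumes "behavioral_strategy K s" and "h \<in> space (hist_space K T)"
  shows "sets (s T h) = sets (act_space K)" and "prob_space (s T h)"
  using measurable_space[OF assms(1)[unfolded behavioral_strategy_def, rule_format, of T] assms(2)]
  by (auto simp: space_prob_algebra)

lemma behavioral_strategy_pairD:
  assumes "behavioral_strategy K sX" and "behavioral_strategy K sY"
    and "h \<in> space (hist_space K T)"
  shows "sets (sX T h \<Otimes>\<^sub>M sY T h) = sets (pair_space K)" and "prob_space (sX T h \<Otimes>\<^sub>M sY T h)"
  using behavioral_strategyD[OF assms(1,3)] behavioral_strategyD[OF assms(2,3)]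
  by (auto simp: pair_space_def intro: sets_pair_measure_cong prob_space_pair)

lemma measurable_play_step:
  assumes "behavioral_strategy K sX" and "behavioral_strategy K sY"
  shows "play_step K sX sY T \<in> hist_space K T \<rightarrow>\<^sub>M prob_algebra (hist_space K (Suc T))"
  unfolding play_step_def
proof (rule measurable_distr_prob_space2[OF _ measurable_hist_snoc])
  show "(\<lambda>h. sX T h \<Otimes>\<^sub>M sY T h) \<in> hist_space K T \<rightarrow>\<^sub>M prob_algebra (pair_space K)"
    using assms unfolding pair_space_def behavioral_strategy_def by (intro measurable_pair_prob) auto
qed

lemma integral_play_step_last:
  fixes g :: "real \<times> real \<Rightarrow> real"
  assumes "behavioral_strategy K sX" and "behavioral_strategy K sY"
    and h: "h \<in> space (hist_space K T)" and g: "g \<in> borel_measurable (pair_space K)"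
  shows "(\<integral>h'. g (h' T) \<partial>play_step K sX sY T h) = (\<integral>p. g p \<partial>(sX T h \<Otimes>\<^sub>M sY T h))"
proof -
  have "hist_snoc T h \<in> sX T h \<Otimes>\<^sub>M sY T h \<rightarrow>\<^sub>M hist_space K (Suc T)"
    unfolding measurable_cong_sets[OF behavioral_strategy_pairD(1)[OF assms(1-3)] refl]
    using measurable_Pair2[OF measurable_hist_snoc h] by simp
  moreover have "(\<lambda>h'. g (h' T)) \<in> borel_measurable (hist_space K (Suc T))"
    using measurable_compose[OF measurable_hist_component g] by simp
  ultimately show ?thesis
    unfolding play_step_def by (simp add: integral_distr hist_snoc_def)
qed

lemma mu_in_prob_algebra:
  assumes sX: "behavioral_strategy K sX" and sY: "behavioral_strategy K sY"
  shows "mu K sX sY t \<in> space (prob_algebra (hist_space K (Suc t)))"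
proof (induction t)
  case 0
  have "(\<lambda>_. undefined) \<in> space (hist_space K 0)"
    by (simp add: space_hist_space)
  then show ?case
    unfolding mu_play_step by (rule measurable_space[OF measurable_play_step[OF sX sY]])
next
  case (Suc t)
  then show ?case
    using measurable_play_step[OF sX sY, of "Suc t"] unfolding mu_play_step(2)
    by (simp add: space_prob_algebra prob_space_bind' sets_bind')
qed

lemma
  assumes "behavioral_strategy K sX" and "behavioral_strategy K sY"
  shows sets_mu: "sets (mu K sX sY t) = sets (hist_space K (Suc t))"
    and space_mu: "space (mu K sX sY t) = space (hist_space K (Suc t))"
    and prob_space_mu: "prob_space (mu K sX sY t)"
  using mu_in_prob_algebra[OF assms, of t] sets_eq_imp_space_eq
  by (auto simp: space_prob_algebra)

lemma measurable_mu_component: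
  assumes "behavioral_strategy K sX" and "behavioral_strategy K sY" and "i \<le> t"
  shows "(\<lambda>h. h i) \<in> mu K sX sY t \<rightarrow>\<^sub>M pair_space K"
  unfolding measurable_cong_sets[OF sets_mu[OF assms(1,2)] refl]
  using assms(3) by (intro measurable_hist_component) simp

lemma integral_nu:
  fixes f :: "real \<times> real \<Rightarrow> real"
  assumes "behavioral_strategy K sX" and "behavioral_strategy K sY"
    and "f \<in> borel_measurable (pair_space K)"
  shows "integral\<^sup>L (nu K sX sY t) f = (\<integral>h. f (h t) \<partial>mu K sX sY t)"
  unfolding nu_def by (rule integral_distr[OF measurable_mu_component[OF assms(1,2) order_refl] assms(3)])

lemma
  fixes g :: "real \<times> real \<Rightarrow> real"
  assumes sX: "behavioral_strategy K sX" and sY: "behavioral_strategy K sY"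
    and g: "g \<in> borel_measurable (pair_space K)"
    and g_bound: "\<And>p. p \<in> space (pair_space K) \<Longrightarrow> \<bar>g p\<bar> \<le> B"
  shows integrable_mu_last: "integrable (mu K sX sY t) (\<lambda>h. g (h t))"
    and abs_integral_mu_last_le: "\<bar>\<integral>h. g (h t) \<partial>mu K sX sY t\<bar> \<le> B"
proof -
  interpret prob_space "mu K sX sY t" by (rule prob_space_mu[OF sX sY])
  have bound: "AE h in mu K sX sY t. \<bar>g (h t)\<bar> \<le> B"
    using g_bound hist_space_component space_mu[OF sX sY] by (intro AE_I2) auto
  show int: "integrable (mu K sX sY t) (\<lambda>h. g (h t))"
    using measurable_compose[OF measurable_mu_component[OF sX sY order_refl] g] bound
    by (intro integrable_const_bound[where B = B]) auto
  have "-B \<le> (\<integral>h. g (h t) \<partial>mu K sX sY t)"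
    using bound by (intro integral_ge_const[OF int]) auto
  moreover have "(\<integral>h. g (h t) \<partial>mu K sX sY t) \<le> B"
    using bound by (intro integral_le_const[OF int]) auto
  ultimately show "\<bar>\<integral>h. g (h t) \<partial>mu K sX sY t\<bar> \<le> B"
    by linarith
qed

lemma integral_mu_Suc_last:
  fixes g :: "real \<times> real \<Rightarrow> real"
  assumes sX: "behavioral_strategy K sX" and sY: "behavioral_strategy K sY"
    and g: "g \<in> borel_measurable (pair_space K)"
    and g_bound: "\<And>p. p \<in> space (pair_space K) \<Longrightarrow> \<bar>g p\<bar> \<le> B"
  shows "(\<integral>h. g (h (Suc t)) \<partial>mu K sX sY (Suc t))
     = (\<integral>h. (\<integral>p. g p \<partial>(sX (Suc t) h \<Otimes>\<^sub>M sY (Suc t) h)) \<partial>mu K sX sY t)"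
proof -
  have step: "play_step K sX sY (Suc t) \<in> mu K sX sY t \<rightarrow>\<^sub>M prob_algebra (hist_space K (Suc (Suc t)))"
    unfolding measurable_cong_sets[OF sets_mu[OF sX sY] refl] by (rule measurable_play_step[OF sX sY])
  have "(\<integral>h. g (h (Suc t)) \<partial>mu K sX sY (Suc t))
      = (\<integral>h. (\<integral>h'. g (h' (Suc t)) \<partial>play_step K sX sY (Suc t) h) \<partial>mu K sX sY t)"
    unfolding mu_play_step(2)
  proof (rule integral_bind[where B = B and B' = 1])
    show "(\<lambda>h. g (h (Suc t))) \<in> borel_measurable (hist_space K (Suc (Suc t)))"
      using measurable_compose[OF measurable_hist_component g] by simp
    show "\<bar>g (h (Suc t))\<bar> \<le> B" if "h \<in> space (hist_space K (Suc (Suc t)))" for h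
      using that by (intro g_bound hist_space_component) auto
    show "play_step K sX sY (Suc t) \<in> mu K sX sY t \<rightarrow>\<^sub>M subprob_algebra (hist_space K (Suc (Suc t)))"
      by (rule measurable_prob_algebraD[OF step])
    show "finite_measure (mu K sX sY t)"
      using prob_space_mu[OF sX sY] by (simp add: prob_space_def)
    show "AE h in mu K sX sY t. emeasure (play_step K sX sY (Suc t) h) (space (play_step K sX sY (Suc t) h)) \<le> ennreal 1"
      using measurable_space[OF step] by (intro AE_I2) (simp add: space_prob_algebra prob_space.emeasure_space_1)
  qed
  also have "\<dots> = (\<integral>h. (\<integral>p. g p \<partial>(sX (Suc t) h \<Otimes>\<^sub>M sY (Suc t) h)) \<partial>mu K sX sY t)"
    using integral_play_step_last[OF sX sY _ g] space_mu[OF sX sY]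
    by (intro Bochner_Integration.integral_cong) auto
  finally show ?thesis .
qed

lemma integral_return_pair_fst:
  fixes f :: "'a \<Rightarrow> real"
  assumes a: "a \<in> space M" and N: "prob_space N" and f: "f \<in> borel_measurable M"
  shows "(\<integral>p. f (fst p) \<partial>(return M a \<Otimes>\<^sub>M N)) = f a"
proof -
  have f': "f \<in> borel_measurable (return M a)"
    using f by (simp add: measurable_cong_sets[OF sets_return refl])
  have "(\<integral>p. f (fst p) \<partial>(return M a \<Otimes>\<^sub>M N)) = integral\<^sup>L (distr (return M a \<Otimes>\<^sub>M N) (return M a) fst) f"
    by (rule integral_distr[symmetric, OF measurable_fst f'])
  also have "\<dots> = f a"
    by (simp add: prob_space.distr_pair_fst[OF N] integral_return[OF a f])
  finally show ?thesis .
qed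

lemma discounted_sum_telescope:
  fixes E F :: "nat \<Rightarrow> real"
  assumes lam: "0 < lam" "lam < 1" and E_bound: "\<And>t. \<bar>E t\<bar> \<le> M"
    and rec: "\<And>t. lam * E (Suc t) = F t + D"
  shows "(1 - lam) * (\<Sum>t. lam ^ t * (E t - F t)) = (1 - lam) * E 0 + D"
proof -
  have "(\<lambda>t. lam ^ t * E t) \<longlonglongrightarrow> 0"
  proof (rule Lim_null_comparison)
    show "\<forall>\<^sub>F t in sequentially. norm (lam ^ t * E t) \<le> M * lam ^ t"
      using E_bound lam by (intro always_eventually allI) (simp add: abs_mult mult.commute mult_left_mono)
    show "(\<lambda>t. M * lam ^ t) \<longlonglongrightarrow> 0"
      using lam by (intro tendsto_mult_right_zero LIMSEQ_power_zero) simp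
  qed
  then have "(\<lambda>t. lam ^ t * E t - lam ^ Suc t * E (Suc t)) sums E 0"
    using telescope_sums'[of "\<lambda>t. lam ^ t * E t" 0] by simp
  moreover have "(\<lambda>t. D * lam ^ t) sums (D / (1 - lam))"
    using sums_mult[OF geometric_sums, of lam D] lam by simp
  ultimately have "(\<lambda>t. (lam ^ t * E t - lam ^ Suc t * E (Suc t)) + D * lam ^ t) sums (E 0 + D / (1 - lam))"
    by (rule sums_add)
  moreover have "lam ^ Suc t * E (Suc t) = lam ^ t * (F t + D)" for t
    using rec[of t] by (simp add: mult.assoc)
  ultimately have "(\<lambda>t. lam ^ t * (E t - F t)) sums (E 0 + D / (1 - lam))"
    by (simp add: algebra_simps)
  then show ?thesis
    using lam by (simp add: sums_iff field_simps)
qed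

definition pure_memory_one :: "real \<Rightarrow> real \<Rightarrow> (real \<Rightarrow> real \<Rightarrow> real) \<Rightarrow> strategy" where
  "pure_memory_one K x0 r = memory_one (return (act_space K) x0) (\<lambda>x y. return (act_space K) (r x y))"

lemma behavioral_strategy_pure_memory_one:
  assumes x0: "x0 \<in> {0..K}" and r: "(\<lambda>(x, y). r x y) \<in> pair_space K \<rightarrow>\<^sub>M act_space K"
  shows "behavioral_strategy K (pure_memory_one K x0 r)"
  unfolding behavioral_strategy_def
proof
  fix T
  show "pure_memory_one K x0 r T \<in> hist_space K T \<rightarrow>\<^sub>M prob_algebra (act_space K)"
  proof (cases T)
    case 0
    have "return (act_space K) x0 \<in> space (prob_algebra (act_space K))"
      using x0 by (intro measurable_space[OF measurable_return_prob_space]) (simp add: space_act_space)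
    then show ?thesis
      unfolding 0 pure_memory_one_def memory_one_def by simp
  next
    case (Suc n)
    have "(\<lambda>h. r (fst (h n)) (snd (h n))) \<in> hist_space K T \<rightarrow>\<^sub>M act_space K"
      using measurable_compose[OF measurable_hist_component r, of n T] Suc by (simp add: case_prod_beta)
    then show ?thesis
      unfolding Suc pure_memory_one_def memory_one_def
      by (simp add: measurable_compose[OF _ measurable_return_prob_space])
  qed
qed

lemma mu_last_action_mem:
  assumes "behavioral_strategy K sX" and "behavioral_strategy K sY" and "h \<in> space (mu K sX sY t)"
  shows "fst (h t) \<in> {0..K}" and "snd (h t) \<in> {0..K}"
  using assms hist_space_component[of h K "Suc t" t] by (auto simp: space_mu space_pair_space)

lemma
  fixes f :: "real \<Rightarrow> real"
  assumes x0: "x0 \<in> {0..K}" and r: "(\<lambda>(x, y). r x y) \<in> pair_space K \<rightarrow>\<^sub>M act_space K"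
    and sY: "behavioral_strategy K sY"
    and f: "f \<in> borel_measurable (act_space K)" and f_bound: "\<And>s. s \<in> {0..K} \<Longrightarrow> \<bar>f s\<bar> \<le> B"
  shows integral_mu_0_pure_memory_one: "(\<integral>h. f (fst (h 0)) \<partial>mu K (pure_memory_one K x0 r) sY 0) = f x0"
    and integral_mu_Suc_pure_memory_one:
      "(\<integral>h. f (fst (h (Suc t))) \<partial>mu K (pure_memory_one K x0 r) sY (Suc t))
     = (\<integral>h. f (r (fst (h t)) (snd (h t))) \<partial>mu K (pure_memory_one K x0 r) sY t)"
proof -
  let ?sX = "pure_memory_one K x0 r"
  have sX: "behavioral_strategy K ?sX"
    by (rule behavioral_strategy_pure_memory_one[OF x0 r])
  have f_fst: "(\<lambda>p. f (fst p)) \<in> borel_measurable (pair_space K)"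
    using measurable_compose[OF measurable_fst f] by (simp add: pair_space_def)
  have u: "(\<lambda>_. undefined) \<in> space (hist_space K 0)"
    by (simp add: space_hist_space)
  have "(\<integral>h. f (fst (h 0)) \<partial>mu K ?sX sY 0) = (\<integral>p. f (fst p) \<partial>(?sX 0 (\<lambda>_. undefined) \<Otimes>\<^sub>M sY 0 (\<lambda>_. undefined)))"
    unfolding mu_play_step(1) by (rule integral_play_step_last[OF sX sY u f_fst])
  also have "\<dots> = f x0"
    unfolding pure_memory_one_def memory_one_def
    using x0 by (simp add: integral_return_pair_fst[OF _ behavioral_strategyD(2)[OF sY u] f] space_act_space)
  finally show "(\<integral>h. f (fst (h 0)) \<partial>mu K ?sX sY 0) = f x0" .
  have "(\<integral>h. f (fst (h (Suc t))) \<partial>mu K ?sX sY (Suc t))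
      = (\<integral>h. (\<integral>p. f (fst p) \<partial>(?sX (Suc t) h \<Otimes>\<^sub>M sY (Suc t) h)) \<partial>mu K ?sX sY t)"
    using f_bound by (intro integral_mu_Suc_last[OF sX sY f_fst, where B = B]) (auto simp: space_pair_space)
  also have "\<dots> = (\<integral>h. f (r (fst (h t)) (snd (h t))) \<partial>mu K ?sX sY t)"
  proof (rule Bochner_Integration.integral_cong[OF refl])
    fix h assume h: "h \<in> space (mu K ?sX sY t)"
    then have "r (fst (h t)) (snd (h t)) \<in> space (act_space K)"
      using mu_last_action_mem[OF sX sY h] measurable_space[OF r, of "h t"]
      by (auto simp: space_pair_space case_prod_beta mem_Times_iff)
    moreover have "prob_space (sY (Suc t) h)"
      using h space_mu[OF sX sY] by (intro behavioral_strategyD(2)[OF sY]) auto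
    ultimately show "(\<integral>p. f (fst p) \<partial>(?sX (Suc t) h \<Otimes>\<^sub>M sY (Suc t) h)) = f (r (fst (h t)) (snd (h t)))"
      unfolding pure_memory_one_def memory_one_def using integral_return_pair_fst f by simp
  qed
  finally show "(\<integral>h. f (fst (h (Suc t))) \<partial>mu K ?sX sY (Suc t))
      = (\<integral>h. f (r (fst (h t)) (snd (h t))) \<partial>mu K ?sX sY t)" .
qed

lemma payoff_Y_pure_memory_one_equalizer:
  fixes b c :: "real \<Rightarrow> real" and r :: "real \<Rightarrow> real \<Rightarrow> real"
  assumes sY: "behavioral_strategy K sY"
    and b_meas: "b \<in> borel_measurable (act_space K)" and c_meas: "c \<in> borel_measurable (act_space K)"
    and b_bound: "\<And>s. s \<in> {0..K} \<Longrightarrow> \<bar>b s\<bar> \<le> B" and c_bound: "\<And>s. s \<in> {0..K} \<Longrightarrow> \<bar>c s\<bar> \<le> B"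
    and lam: "0 < lam" "lam < 1" and x0: "x0 \<in> {0..K}"
    and r_meas: "(\<lambda>(x, y). r x y) \<in> pair_space K \<rightarrow>\<^sub>M act_space K"
    and equalizer: "\<And>x y. x \<in> {0..K} \<Longrightarrow> y \<in> {0..K} \<Longrightarrow> lam * b (r x y) = c y + D"
  shows "payoff_Y b c lam K (pure_memory_one K x0 r) sY = (1 - lam) * b x0 + D"
proof -
  let ?sX = "pure_memory_one K x0 r"
  have sX: "behavioral_strategy K ?sX"
    by (rule behavioral_strategy_pure_memory_one[OF x0 r_meas])
  define E where "E t = (\<integral>h. b (fst (h t)) \<partial>mu K ?sX sY t)" for t
  define F where "F t = (\<integral>h. c (snd (h t)) \<partial>mu K ?sX sY t)" for t
  have bf_meas: "(\<lambda>p. b (fst p)) \<in> borel_measurable (pair_space K)"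
    using measurable_compose[OF measurable_fst b_meas] by (simp add: pair_space_def)
  have cs_meas: "(\<lambda>p. c (snd p)) \<in> borel_measurable (pair_space K)"
    using measurable_compose[OF measurable_snd c_meas] by (simp add: pair_space_def)
  have bf_bound: "\<bar>b (fst p)\<bar> \<le> B" and cs_bound: "\<bar>c (snd p)\<bar> \<le> B" if "p \<in> space (pair_space K)" for p
    using that by (auto simp: space_pair_space intro!: b_bound c_bound)
  note c_int = integrable_mu_last[OF sX sY cs_meas cs_bound]
  have "payoff_Y b c lam K ?sX sY = (1 - lam) * (\<Sum>t. lam ^ t * (E t - F t))"
    unfolding payoff_Y_def E_def F_def
    using bf_meas cs_meas integrable_mu_last[OF sX sY bf_meas bf_bound] c_int
    by (simp add: integral_nu[OF sX sY])
  also have "\<dots> = (1 - lam) * E 0 + D"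
  proof (rule discounted_sum_telescope[OF lam])
    show "\<bar>E t\<bar> \<le> B" for t
      unfolding E_def by (rule abs_integral_mu_last_le[OF sX sY bf_meas bf_bound])
    interpret prob_space "mu K ?sX sY t" for t
      by (rule prob_space_mu[OF sX sY])
    have "E (Suc t) = (\<integral>h. b (r (fst (h t)) (snd (h t))) \<partial>mu K ?sX sY t)" for t
      unfolding E_def by (rule integral_mu_Suc_pure_memory_one[OF x0 r_meas sY b_meas b_bound])
    then have "lam * E (Suc t) = (\<integral>h. lam * b (r (fst (h t)) (snd (h t))) \<partial>mu K ?sX sY t)" for t
      by simp
    also have "\<dots> t = (\<integral>h. c (snd (h t)) + D \<partial>mu K ?sX sY t)" for t
      using mu_last_action_mem[OF sX sY] equalizer by (intro Bochner_Integration.integral_cong) auto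
    also have "\<dots> t = F t + D" for t
      unfolding F_def by (subst Bochner_Integration.integral_add) (simp_all add: c_int prob_space)
    finally show "lam * E (Suc t) = F t + D" for t .
  qed
  also have "E 0 = b x0"
    unfolding E_def by (rule integral_mu_0_pure_memory_one[OF x0 r_meas sY b_meas b_bound])
  finally show ?thesis .
qed

lemma continuous_mono_image_Icc:
  fixes f :: "real \<Rightarrow> real"
  assumes "a \<le> b" and "continuous_on {a..b} f" and "mono_on {a..b} f"
  shows "f ` {a..b} = {f a..f b}"
proof
  show "f ` {a..b} \<subseteq> {f a..f b}"
    using assms(1) by (auto intro!: mono_onD[OF assms(3)])
  show "{f a..f b} \<subseteq> f ` {a..b}"
    using IVT'[of f a _ b] assms(1,2) by force
qed

lemma measurable_the_inv_into_Icc: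
  fixes f :: "real \<Rightarrow> real"
  assumes "a \<le> b" and "continuous_on {a..b} f" and "strict_mono_on {a..b} f"
  shows "the_inv_into {a..b} f \<in> restrict_space borel {f a..f b} \<rightarrow>\<^sub>M restrict_space borel {a..b}"
proof (rule measurable_restrict_space2)
  have inj: "inj_on f {a..b}"
    using assms(3) by (rule strict_mono_on_imp_inj_on)
  have image: "f ` {a..b} = {f a..f b}"
    using assms by (intro continuous_mono_image_Icc strict_mono_on_imp_mono_on)
  show "the_inv_into {a..b} f \<in> space (restrict_space borel {f a..f b}) \<rightarrow> {a..b}"
  proof
    fix y assume "y \<in> space (restrict_space borel {f a..f b})"
    then show "the_inv_into {a..b} f y \<in> {a..b}"
      using image by (intro the_inv_into_into[OF inj _ order_refl]) (simp add: space_restrict_space)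
  qed
  show "the_inv_into {a..b} f \<in> borel_measurable (restrict_space borel {f a..f b})"
    using continuous_on_inv_into[OF assms(2) compact_Icc inj] image
    by (intro borel_measurable_continuous_on_restrict) simp
qed

lemma
  fixes b q :: "real \<Rightarrow> real"
  assumes K: "0 \<le> K" and b_cont: "continuous_on {0..K} b" and b_strict: "strict_mono_on {0..K} b"
    and b0: "b 0 = 0" and q_meas: "q \<in> borel_measurable (act_space K)"
    and q_range: "\<And>y. y \<in> {0..K} \<Longrightarrow> q y \<in> {0..b K}"
  shows measurable_inverse_response:
      "(\<lambda>(x, y). the_inv_into {0..K} b (q y)) \<in> pair_space K \<rightarrow>\<^sub>M act_space K"
    and apply_inverse_response: "y \<in> {0..K} \<Longrightarrow> b (the_inv_into {0..K} b (q y)) = q y"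
proof -
  have q: "q \<in> act_space K \<rightarrow>\<^sub>M restrict_space borel {b 0..b K}"
    using q_range b0 q_meas by (intro measurable_restrict_space2) (auto simp: space_act_space)
  have inv: "the_inv_into {0..K} b \<in> restrict_space borel {b 0..b K} \<rightarrow>\<^sub>M act_space K"
    unfolding act_space_def using K b_cont b_strict by (rule measurable_the_inv_into_Icc)
  have snd: "snd \<in> pair_space K \<rightarrow>\<^sub>M act_space K"
    unfolding pair_space_def by (rule measurable_snd)
  show "(\<lambda>(x, y). the_inv_into {0..K} b (q y)) \<in> pair_space K \<rightarrow>\<^sub>M act_space K"
    using measurable_compose[OF measurable_compose[OF snd q] inv] by (simp add: case_prod_beta)
  show "b (the_inv_into {0..K} b (q y)) = q y" if "y \<in> {0..K}"
    using f_the_inv_into_f[OF strict_mono_on_imp_inj_on[OF b_strict]] q_range[OF that] b0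
      continuous_mono_image_Icc[OF K b_cont strict_mono_on_imp_mono_on[OF b_strict]]
    by simp
qed

theorem mainTheorem12:
  fixes K lam gamma x0 :: real and b c :: "real \<Rightarrow> real"
  assumes K_pos: "K > 0"
    and b_meas: "b \<in> borel_measurable (act_space K)"
    and c_meas: "c \<in> borel_measurable (act_space K)"
    and b_mono: "mono_on {0..K} b" and c_mono: "mono_on {0..K} c"
    and b0: "b 0 = 0" and c0: "c 0 = 0"
    and bc: "\<forall>s\<in>{0<..K}. b s > c s"
    and lam: "0 < lam" "lam < 1"
    and b_cont: "continuous_on {0..K} b"
    and b_strict: "strict_mono_on {0..K} b"
    and gamma: "0 \<le> gamma" "gamma \<le> b K - c K"
    and lam_ge: "lam \<ge> c K / b K"
    and x0: "x0 \<in> {0..K}"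
    and x0_lo: "(gamma - lam * b K + c K) / (1 - lam) \<le> b x0"
    and x0_hi: "b x0 \<le> gamma / (1 - lam)"
  shows "(\<forall>x\<in>{0..K}. \<forall>y\<in>{0..K}.
            (c y + gamma - (1 - lam) * b x0) / lam \<in> {0..b K})
       \<and> (let rX = (\<lambda>x y. the_inv_into {0..K} b ((c y + gamma - (1 - lam) * b x0) / lam));
              sX = memory_one (return (act_space K) x0) (\<lambda>x y. return (act_space K) (rX x y))
          in behavioral_strategy K sX
             \<and> (\<forall>sY. behavioral_strategy K sY \<longrightarrow> payoff_Y b c lam K sX sY = gamma))"
proof -
  define q where "q y = (c y + gamma - (1 - lam) * b x0) / lam" for y
  have b_range: "0 \<le> b s \<and> b s \<le> b K" and c_range: "0 \<le> c s \<and> c s \<le> c K" if "s \<in> {0..K}" for s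
    using that b0 c0 mono_onD[OF b_mono, of 0 s] mono_onD[OF b_mono, of s K]
      mono_onD[OF c_mono, of 0 s] mono_onD[OF c_mono, of s K] by auto
  have q_range: "q y \<in> {0..b K}" if "y \<in> {0..K}" for y
    using c_range[OF that] x0_lo x0_hi lam by (auto simp: q_def field_simps)
  have q_meas: "q \<in> borel_measurable (act_space K)"
    unfolding q_def[abs_def] using c_meas by simp
  note response = measurable_inverse_response[OF _ b_cont b_strict b0 q_meas q_range]
    apply_inverse_response[OF _ b_cont b_strict b0 q_meas q_range]
  have bounds: "\<bar>b s\<bar> \<le> b K" "\<bar>c s\<bar> \<le> b K" if "s \<in> {0..K}" for s
    using b_range[OF that] c_range[OF that] bc[rule_format, of K] K_pos by auto
  have "payoff_Y b c lam K (pure_memory_one K x0 (\<lambda>x y. the_inv_into {0..K} b (q y))) sY = gamma"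
    if "behavioral_strategy K sY" for sY
    using K_pos lam response
    by (subst payoff_Y_pure_memory_one_equalizer[OF that b_meas c_meas bounds lam x0,
          where D = "gamma - (1 - lam) * b x0"]) (auto simp: q_def)
  then show ?thesis
    using q_range behavioral_strategy_pure_memory_one[OF x0 response(1)] K_pos
    by (simp add: q_def pure_memory_one_def)
qed

end
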